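(* Let $\mathcal{H}$ be a reproducing kernel Hilbert space of functions on a set $X$, with multiplier algebra $\mathcal{M}(\mathcal{H})$. Let $(\phi_n)_{n\ge1}$ be a sequence of elements of the closed unit ball of $\mathcal{M}(\mathcal{H})$. Put $\Phi_0=1$ and $\Phi_n:=\phi_1\phi_2\cdots\phi_n$ for $n\ge1$. Assume that $\lim_{n\to\infty}\Phi_n(x)=0$ for every $x\in X$. Then for every $f\in\mathcal{H}$, \[ f=\sum_{n=1}^{\infty}\Phi_{n-1}\cdot Q_{\phi_n}M_{\Phi_{n-1}}^{*}f, \] where the series converges in the norm of $\mathcal{H}$.
   Context: For a multiplier $\phi\in\mathcal{M}(\mathcal{H})$, $M_\phi:\mathcal{H}\to\mathcal{H}$ denotes the multiplication operator $M_\phi g=\phi g$, and $M_\phi^*$ its Hilbert space adjoint. The multiplier norm of $\phi$ is the operator norm of $M_\phi$; the closed unit ball of $\mathcal{M}(\mathcal{H})$ consists of the multipliers with $\|M_\phi\|\le 1$. For $\phi\in\mathcal{M}(\mathcal{H})$ define $P_\phi:=M_\phi M_\phi^*$ and $Q_\phi:=I-M_\phi M_\phi^*$, where $I$ is the identity on $\mathcal{H}$. The reproducing kernel of $\mathcal{H}$ at $x\in X$ is denoted $k_x$. *)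

theory Defs
  imports Complex_Main
begin

text \<open>A Hilbert space of complex-valued functions on the set X (modelled as the
  type 'x), given by its carrier H and inner product ip (linear in the first,
  conjugate-linear in the second argument).\<close>

definition hnorm :: "(('x \<Rightarrow> complex) \<Rightarrow> ('x \<Rightarrow> complex) \<Rightarrow> complex) \<Rightarrow> ('x \<Rightarrow> complex) \<Rightarrow> real" where
  "hnorm ip f = sqrt (Re (ip f f))"

definition rkhs :: "('x \<Rightarrow> complex) set \<Rightarrow> (('x \<Rightarrow> complex) \<Rightarrow> ('x \<Rightarrow> complex) \<Rightarrow> complex) \<Rightarrow> bool" where
  "rkhs H ip \<longleftrightarrow>
     (\<lambda>x. 0) \<in> H
   \<and> (\<forall>f\<in>H. \<forall>g\<in>H. (\<lambda>x. f x + g x) \<in> H)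
   \<and> (\<forall>c. \<forall>f\<in>H. (\<lambda>x. c * f x) \<in> H)
   \<and> (\<forall>f\<in>H. \<forall>g\<in>H. \<forall>h\<in>H. ip (\<lambda>x. f x + g x) h = ip f h + ip g h)
   \<and> (\<forall>c. \<forall>f\<in>H. \<forall>g\<in>H. ip (\<lambda>x. c * f x) g = c * ip f g)
   \<and> (\<forall>f\<in>H. \<forall>g\<in>H. ip g f = cnj (ip f g))
   \<and> (\<forall>f\<in>H. Im (ip f f) = 0 \<and> Re (ip f f) \<ge> 0)
   \<and> (\<forall>f\<in>H. ip f f = 0 \<longrightarrow> f = (\<lambda>x. 0))
   \<comment> \<open>completeness\<close>
   \<and> (\<forall>s::nat \<Rightarrow> ('x \<Rightarrow> complex). (\<forall>n. s n \<in> H) \<longrightarrow>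
        (\<forall>e>0. \<exists>N. \<forall>m\<ge>N. \<forall>n\<ge>N. hnorm ip (\<lambda>x. s m x - s n x) < e) \<longrightarrow>
        (\<exists>g\<in>H. (\<lambda>n. hnorm ip (\<lambda>x. s n x - g x)) \<longlonglongrightarrow> 0))
   \<comment> \<open>point evaluations are bounded (reproducing kernel property)\<close>
   \<and> (\<forall>x. \<exists>C. \<forall>f\<in>H. cmod (f x) \<le> C * hnorm ip f)"

definition multiplier :: "('x \<Rightarrow> complex) set \<Rightarrow> ('x \<Rightarrow> complex) \<Rightarrow> bool" where
  "multiplier H \<phi> \<longleftrightarrow> (\<forall>f\<in>H. (\<lambda>x. \<phi> x * f x) \<in> H)"

definition mult_ball :: "('x \<Rightarrow> complex) set \<Rightarrow> (('x \<Rightarrow> complex) \<Rightarrow> ('x \<Rightarrow> complex) \<Rightarrow> complex) \<Rightarrow> ('x \<Rightarrow> complex) \<Rightarrow> bool" where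
  "mult_ball H ip \<phi> \<longleftrightarrow> multiplier H \<phi> \<and>
     (\<forall>f\<in>H. hnorm ip (\<lambda>x. \<phi> x * f x) \<le> hnorm ip f)"

definition Mop :: "('x \<Rightarrow> complex) \<Rightarrow> ('x \<Rightarrow> complex) \<Rightarrow> ('x \<Rightarrow> complex)" where
  "Mop \<phi> f = (\<lambda>x. \<phi> x * f x)"

definition hadj :: "('x \<Rightarrow> complex) set \<Rightarrow> (('x \<Rightarrow> complex) \<Rightarrow> ('x \<Rightarrow> complex) \<Rightarrow> complex)
    \<Rightarrow> (('x \<Rightarrow> complex) \<Rightarrow> ('x \<Rightarrow> complex)) \<Rightarrow> ('x \<Rightarrow> complex) \<Rightarrow> ('x \<Rightarrow> complex)" where
  "hadj H ip T f = (THE g. g \<in> H \<and> (\<forall>h\<in>H. ip (T h) f = ip h g))"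

definition Qop :: "('x \<Rightarrow> complex) set \<Rightarrow> (('x \<Rightarrow> complex) \<Rightarrow> ('x \<Rightarrow> complex) \<Rightarrow> complex)
    \<Rightarrow> ('x \<Rightarrow> complex) \<Rightarrow> ('x \<Rightarrow> complex) \<Rightarrow> ('x \<Rightarrow> complex)" where
  "Qop H ip \<phi> f = (\<lambda>x. f x - Mop \<phi> (hadj H ip (Mop \<phi>) f) x)"

definition Phi :: "(nat \<Rightarrow> 'x \<Rightarrow> complex) \<Rightarrow> nat \<Rightarrow> 'x \<Rightarrow> complex" where
  "Phi \<phi> n = (\<lambda>x. \<Prod>k\<in>{1..n}. \<phi> k x)"

end

theory Submission
  imports Defs
begin

text \<open>Write Phi_n for the product of the first n multipliers and g_n = M_(Phi_n)^* f.
  The N-th partial sum of the series telescopes to f - Phi_N g_N, so it suffices to show that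
  the tails r_n = Phi_n g_n tend to 0 in norm. Every phi_n is a contractive multiplier, so the
  norms of the g_n decrease; and for n <= m one has r_n - r_m = Phi_n Q g_n, where
  Q = I - M_psi M_psi^* with psi = phi_(n+1) ... phi_m, whence
  ||r_n - r_m||^2 <= ||g_n||^2 - ||g_m||^2. So (r_n) is a Cauchy sequence. Its limit vanishes,
  since point evaluations are bounded and |r_n(x)| <= |Phi_n(x)| C_x ||f|| tends to 0.
  The adjoints M_psi^* exist by the Riesz representation theorem, which follows by minimising
  the norm over the affine hyperplane where the functional equals 1.\<close>

definition hCauchy :: "(('x \<Rightarrow> complex) \<Rightarrow> ('x \<Rightarrow> complex) \<Rightarrow> complex) \<Rightarrow> (nat \<Rightarrow> 'x \<Rightarrow> complex) \<Rightarrow> bool"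
  where "hCauchy ip s \<longleftrightarrow> (\<forall>e>0. \<exists>N. \<forall>m\<ge>N. \<forall>n\<ge>N. hnorm ip (\<lambda>x. s m x - s n x) < e)"

definition hlinear :: "('x \<Rightarrow> complex) set \<Rightarrow> (('x \<Rightarrow> complex) \<Rightarrow> complex) \<Rightarrow> bool"
  where "hlinear H L \<longleftrightarrow>
    (\<forall>f\<in>H. \<forall>g\<in>H. L (\<lambda>x. f x + g x) = L f + L g) \<and> (\<forall>c. \<forall>f\<in>H. L (\<lambda>x. c * f x) = c * L f)"

lemma hlinear_add: "hlinear H L \<Longrightarrow> f \<in> H \<Longrightarrow> g \<in> H \<Longrightarrow> L (\<lambda>x. f x + g x) = L f + L g"
  by (simp add: hlinear_def)

lemma hlinear_scale: "hlinear H L \<Longrightarrow> f \<in> H \<Longrightarrow> L (\<lambda>x. c * f x) = c * L f"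
  by (simp add: hlinear_def)

lemma mult_ball_mem: "mult_ball H ip \<psi> \<Longrightarrow> h \<in> H \<Longrightarrow> (\<lambda>x. \<psi> x * h x) \<in> H"
  unfolding mult_ball_def multiplier_def by blast

lemma mult_ball_hnorm_le: "mult_ball H ip \<psi> \<Longrightarrow> h \<in> H \<Longrightarrow> hnorm ip (\<lambda>x. \<psi> x * h x) \<le> hnorm ip h"
  unfolding mult_ball_def by blast

lemma mult_ball_one: "mult_ball H ip (\<lambda>x. 1)"
  unfolding mult_ball_def multiplier_def by simp

lemma mult_ball_mult:
  assumes "mult_ball H ip \<alpha>" "mult_ball H ip \<beta>"
  shows "mult_ball H ip (\<lambda>x. \<alpha> x * \<beta> x)"
  using mult_ball_mem[OF assms(1) mult_ball_mem[OF assms(2)]]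
    order_trans[OF mult_ball_hnorm_le[OF assms(1) mult_ball_mem[OF assms(2)]] mult_ball_hnorm_le[OF assms(2)]]
  unfolding mult_ball_def multiplier_def by (simp add: mult.assoc)

lemma mult_ball_prod:
  assumes "finite S" "\<And>k. k \<in> S \<Longrightarrow> mult_ball H ip (\<phi> k)"
  shows "mult_ball H ip (\<lambda>x. \<Prod>k\<in>S. \<phi> k x)"
  using assms
proof (induction S rule: finite_induct)
  case empty
  then show ?case
    using mult_ball_one by simp
next
  case (insert a S)
  then have "mult_ball H ip (\<lambda>x. \<phi> a x * (\<Prod>k\<in>S. \<phi> k x))"
    by (intro mult_ball_mult) auto
  then show ?case
    using insert by simp
qed

locale rkhs_space =
  fixes H :: "('x \<Rightarrow> complex) set"
    and ip :: "('x \<Rightarrow> complex) \<Rightarrow> ('x \<Rightarrow> complex) \<Rightarrow> complex"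
  assumes rkhs: "rkhs H ip"
begin

lemma zero_mem: "(\<lambda>x. 0) \<in> H"
  using rkhs unfolding rkhs_def by blast

lemma add_mem: "f \<in> H \<Longrightarrow> g \<in> H \<Longrightarrow> (\<lambda>x. f x + g x) \<in> H"
  using rkhs unfolding rkhs_def by blast

lemma scale_mem: "f \<in> H \<Longrightarrow> (\<lambda>x. c * f x) \<in> H"
  using rkhs unfolding rkhs_def by blast

lemma ip_add_left: "f \<in> H \<Longrightarrow> g \<in> H \<Longrightarrow> h \<in> H \<Longrightarrow> ip (\<lambda>x. f x + g x) h = ip f h + ip g h"
  using rkhs unfolding rkhs_def by blast

lemma ip_scale_left: "f \<in> H \<Longrightarrow> g \<in> H \<Longrightarrow> ip (\<lambda>x. c * f x) g = c * ip f g"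
  using rkhs unfolding rkhs_def by blast

lemma ip_cnj_commute: "f \<in> H \<Longrightarrow> g \<in> H \<Longrightarrow> ip g f = cnj (ip f g)"
  using rkhs unfolding rkhs_def by blast

lemma ip_self_real_nonneg: "f \<in> H \<Longrightarrow> Im (ip f f) = 0 \<and> Re (ip f f) \<ge> 0"
  using rkhs unfolding rkhs_def by blast

lemma ip_self_eq_0D: "f \<in> H \<Longrightarrow> ip f f = 0 \<Longrightarrow> f = (\<lambda>x. 0)"
  using rkhs unfolding rkhs_def by blast

lemma complete:
  "(\<And>n. s n \<in> H) \<Longrightarrow> hCauchy ip s \<Longrightarrow> \<exists>z\<in>H. (\<lambda>n. hnorm ip (\<lambda>x. s n x - z x)) \<longlonglongrightarrow> 0"
  using rkhs unfolding rkhs_def hCauchy_def by blast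

lemma eval_bounded: "\<exists>C. \<forall>f\<in>H. cmod (f x) \<le> C * hnorm ip f"
  using rkhs unfolding rkhs_def by blast

lemma diff_mem: "f \<in> H \<Longrightarrow> g \<in> H \<Longrightarrow> (\<lambda>x. f x - g x) \<in> H"
  using add_mem[of f "\<lambda>x. (-1) * g x"] scale_mem[of g "-1"] by simp

lemma ip_zero_left: "h \<in> H \<Longrightarrow> ip (\<lambda>x. 0) h = 0"
  using ip_scale_left[OF zero_mem, of h 0] by simp

lemma ip_diff_left: "f \<in> H \<Longrightarrow> g \<in> H \<Longrightarrow> h \<in> H \<Longrightarrow> ip (\<lambda>x. f x - g x) h = ip f h - ip g h"
  using ip_add_left[of f "\<lambda>x. (-1) * g x" h] ip_scale_left[of g h "-1"] scale_mem[of g "-1"]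
  by simp

lemma ip_add_right: "f \<in> H \<Longrightarrow> g \<in> H \<Longrightarrow> h \<in> H \<Longrightarrow> ip h (\<lambda>x. f x + g x) = ip h f + ip h g"
  using ip_cnj_commute[of "\<lambda>x. f x + g x" h] ip_cnj_commute[of f h] ip_cnj_commute[of g h]
    add_mem ip_add_left by simp

lemma ip_diff_right: "f \<in> H \<Longrightarrow> g \<in> H \<Longrightarrow> h \<in> H \<Longrightarrow> ip h (\<lambda>x. f x - g x) = ip h f - ip h g"
  using ip_cnj_commute[of "\<lambda>x. f x - g x" h] ip_cnj_commute[of f h] ip_cnj_commute[of g h]
    diff_mem ip_diff_left by simp

lemma ip_scale_right: "f \<in> H \<Longrightarrow> g \<in> H \<Longrightarrow> ip g (\<lambda>x. c * f x) = cnj c * ip g f"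
  using ip_cnj_commute[of "\<lambda>x. c * f x" g] ip_cnj_commute[of f g] scale_mem ip_scale_left by simp

lemma ip_zero_right: "h \<in> H \<Longrightarrow> ip h (\<lambda>x. 0) = 0"
  using ip_cnj_commute[of "\<lambda>x. 0" h] zero_mem ip_zero_left by simp

lemma ip_right_unique:
  assumes "g1 \<in> H" "g2 \<in> H" "\<And>h. h \<in> H \<Longrightarrow> ip h g1 = ip h g2"
  shows "g1 = g2"
proof -
  have d: "(\<lambda>x. g1 x - g2 x) \<in> H"
    using assms diff_mem by blast
  then have "ip (\<lambda>x. g1 x - g2 x) (\<lambda>x. g1 x - g2 x) = 0"
    using assms by (simp add: ip_diff_right)
  then have "(\<lambda>x. g1 x - g2 x) = (\<lambda>x. 0)"
    using ip_self_eq_0D d by blast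
  then show ?thesis
    by (simp add: fun_eq_iff)
qed

lemma hnorm_nonneg: "f \<in> H \<Longrightarrow> hnorm ip f \<ge> 0"
  unfolding hnorm_def using ip_self_real_nonneg by simp

lemma hnorm_sq: "f \<in> H \<Longrightarrow> (hnorm ip f)\<^sup>2 = Re (ip f f)"
  unfolding hnorm_def using ip_self_real_nonneg by simp

lemma ip_self_eq_hnorm_sq: "f \<in> H \<Longrightarrow> ip f f = of_real ((hnorm ip f)\<^sup>2)"
  using hnorm_sq ip_self_real_nonneg by (simp add: complex_eq_iff)

lemma hnorm_add_sq: "f \<in> H \<Longrightarrow> g \<in> H \<Longrightarrow>
    (hnorm ip (\<lambda>x. f x + g x))\<^sup>2 = (hnorm ip f)\<^sup>2 + 2 * Re (ip f g) + (hnorm ip g)\<^sup>2"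
  by (simp add: hnorm_sq add_mem ip_add_left ip_add_right ip_cnj_commute[of f g])

lemma hnorm_diff_sq: "f \<in> H \<Longrightarrow> g \<in> H \<Longrightarrow>
    (hnorm ip (\<lambda>x. f x - g x))\<^sup>2 = (hnorm ip f)\<^sup>2 - 2 * Re (ip f g) + (hnorm ip g)\<^sup>2"
  by (simp add: hnorm_sq diff_mem ip_diff_left ip_diff_right ip_cnj_commute[of f g])

lemma hnorm_parallelogram: "f \<in> H \<Longrightarrow> g \<in> H \<Longrightarrow>
    (hnorm ip (\<lambda>x. f x + g x))\<^sup>2 + (hnorm ip (\<lambda>x. f x - g x))\<^sup>2 = 2 * (hnorm ip f)\<^sup>2 + 2 * (hnorm ip g)\<^sup>2"
  by (simp add: hnorm_add_sq hnorm_diff_sq)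

lemma hnorm_scale: "f \<in> H \<Longrightarrow> hnorm ip (\<lambda>x. c * f x) = cmod c * hnorm ip f"
proof -
  assume f: "f \<in> H"
  have "ip (\<lambda>x. c * f x) (\<lambda>x. c * f x) = (c * cnj c) * ip f f"
    using f by (simp add: ip_scale_left ip_scale_right scale_mem)
  also have "c * cnj c = of_real ((cmod c)\<^sup>2)"
    by (simp add: complex_mult_cnj cmod_power2)
  finally have "Re (ip (\<lambda>x. c * f x) (\<lambda>x. c * f x)) = (cmod c)\<^sup>2 * Re (ip f f)"
    by simp
  then show ?thesis
    unfolding hnorm_def by (simp add: real_sqrt_mult)
qed

lemma hnorm_eq_0_iff: "f \<in> H \<Longrightarrow> hnorm ip f = 0 \<longleftrightarrow> f = (\<lambda>x. 0)"
  using ip_self_eq_hnorm_sq[of f] ip_self_eq_0D[of f] ip_zero_left[OF zero_mem]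
  unfolding hnorm_def by auto

lemma hnorm_diff_commute: "f \<in> H \<Longrightarrow> g \<in> H \<Longrightarrow> hnorm ip (\<lambda>x. f x - g x) = hnorm ip (\<lambda>x. g x - f x)"
  using hnorm_scale[OF diff_mem[of g f], of "-1"] by simp

lemma Re_ip_le_hnorm_mult:
  assumes f: "f \<in> H" and g: "g \<in> H"
  shows "Re (ip f g) \<le> hnorm ip f * hnorm ip g"
proof (cases "hnorm ip f = 0 \<or> hnorm ip g = 0")
  case True
  then have "f = (\<lambda>x. 0) \<or> g = (\<lambda>x. 0)"
    using hnorm_eq_0_iff f g by blast
  then show ?thesis
    using ip_zero_left[OF g] ip_zero_right[OF f] hnorm_nonneg[OF f] hnorm_nonneg[OF g] by auto
next
  case False
  define a where "a = hnorm ip g"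
  define b where "b = hnorm ip f"
  have ab: "a > 0" "b > 0"
    using False hnorm_nonneg[OF f] hnorm_nonneg[OF g] a_def b_def by auto
  have "0 \<le> (hnorm ip (\<lambda>x. of_real a * f x - of_real b * g x))\<^sup>2"
    by simp
  also have "\<dots> = a\<^sup>2 * b\<^sup>2 - 2 * (a * b * Re (ip f g)) + b\<^sup>2 * a\<^sup>2"
    using f g ab
    by (simp add: hnorm_diff_sq scale_mem hnorm_scale ip_scale_left ip_scale_right a_def b_def
        power_mult_distrib)
  finally have "a * b * Re (ip f g) \<le> a * b * (a * b)"
    by (simp add: power2_eq_square algebra_simps)
  then show ?thesis
    using ab by (simp add: a_def b_def mult.commute)
qed

lemma norm_ip_le_hnorm_mult:
  assumes f: "f \<in> H" and g: "g \<in> H"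
  shows "cmod (ip f g) \<le> hnorm ip f * hnorm ip g"
proof (cases "ip f g = 0")
  case True
  then show ?thesis
    using hnorm_nonneg f g by simp
next
  case False
  define u where "u = cnj (ip f g) / of_real (cmod (ip f g))"
  have u: "cmod u = 1" "u * ip f g = of_real (cmod (ip f g))"
    using False unfolding u_def
    by (simp_all add: norm_divide complex_norm_square[symmetric] mult.commute power2_eq_square)
  have "cmod (ip f g) = Re (ip (\<lambda>x. u * f x) g)"
    using f g u(2) by (simp add: ip_scale_left)
  also have "\<dots> \<le> hnorm ip f * hnorm ip g"
    using Re_ip_le_hnorm_mult[OF scale_mem[OF f] g, of u] f u(1) by (simp add: hnorm_scale)
  finally show ?thesis .
qed

lemma hnorm_triangle: "f \<in> H \<Longrightarrow> g \<in> H \<Longrightarrow> hnorm ip (\<lambda>x. f x + g x) \<le> hnorm ip f + hnorm ip g"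
proof -
  assume f: "f \<in> H" and g: "g \<in> H"
  have "(hnorm ip (\<lambda>x. f x + g x))\<^sup>2 \<le> (hnorm ip f + hnorm ip g)\<^sup>2"
    using hnorm_add_sq[OF f g] Re_ip_le_hnorm_mult[OF f g] by (simp add: power2_eq_square algebra_simps)
  then show ?thesis
    using hnorm_nonneg f g by (meson add_nonneg_nonneg power2_le_imp_le)
qed

lemma tendsto_eval:
  assumes "\<And>n. s n \<in> H" "z \<in> H" "(\<lambda>n. hnorm ip (\<lambda>x. s n x - z x)) \<longlonglongrightarrow> 0"
  shows "(\<lambda>n. s n x) \<longlonglongrightarrow> z x"
proof -
  obtain C where C: "\<forall>h\<in>H. cmod (h x) \<le> C * hnorm ip h"
    using eval_bounded by blast
  have "(\<lambda>n. s n x - z x) \<longlonglongrightarrow> 0"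
  proof (rule tendsto_0_le[OF assms(3), where K = C], intro always_eventually allI)
    fix n
    show "norm (s n x - z x) \<le> norm (hnorm ip (\<lambda>x. s n x - z x)) * C"
      using C diff_mem[OF assms(1,2)] hnorm_nonneg[OF diff_mem[OF assms(1,2)]]
      by (auto simp: mult.commute)
  qed
  then show ?thesis
    by (simp add: LIM_zero_iff)
qed

lemma hnorm_tendsto_0_if_hCauchy:
  assumes "\<And>n. s n \<in> H" "hCauchy ip s" "\<And>x. (\<lambda>n. s n x) \<longlonglongrightarrow> 0"
  shows "(\<lambda>n. hnorm ip (s n)) \<longlonglongrightarrow> 0"
proof -
  obtain z where z: "z \<in> H" "(\<lambda>n. hnorm ip (\<lambda>x. s n x - z x)) \<longlonglongrightarrow> 0"
    using complete assms(1,2) by blast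
  have "z = (\<lambda>x. 0)"
    using LIMSEQ_unique[OF tendsto_eval[OF assms(1) z] assms(3)] by blast
  then show ?thesis
    using z(2) by simp
qed

lemma hCauchy_if_hnorm_sq_diff_le:
  assumes "\<And>n. s n \<in> H" "b \<longlonglongrightarrow> 0"
    and le: "\<And>n m. n \<le> m \<Longrightarrow> (hnorm ip (\<lambda>x. s n x - s m x))\<^sup>2 \<le> b n"
  shows "hCauchy ip s"
  unfolding hCauchy_def
proof (intro allI impI)
  fix e :: real
  assume e: "e > 0"
  obtain M where M: "\<And>n. n \<ge> M \<Longrightarrow> b n < e\<^sup>2"
    using LIMSEQ_D[OF assms(2), of "e\<^sup>2"] e by fastforce
  have lt: "hnorm ip (\<lambda>x. s n x - s m x) < e" if "M \<le> n" "n \<le> m" for n m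
  proof -
    have "(hnorm ip (\<lambda>x. s n x - s m x))\<^sup>2 < e\<^sup>2"
      using le[OF that(2)] M[OF that(1)] by linarith
    then show ?thesis
      using e by (meson less_le power_less_imp_less_base)
  qed
  show "\<exists>N. \<forall>m\<ge>N. \<forall>n\<ge>N. hnorm ip (\<lambda>x. s m x - s n x) < e"
    using lt hnorm_diff_commute[OF assms(1) assms(1)] by (metis nat_le_linear)
qed

lemma hCauchy_minimising_sequence:
  assumes A: "A \<subseteq> H"
    and midpoint: "\<And>h k. h \<in> A \<Longrightarrow> k \<in> A \<Longrightarrow> (\<lambda>x. (1/2) * (h x + k x)) \<in> A"
    and D_le: "\<And>h. h \<in> A \<Longrightarrow> D \<le> (hnorm ip h)\<^sup>2"
    and s: "\<And>n. s n \<in> A" "\<And>n. (hnorm ip (s n))\<^sup>2 < D + inverse (real (Suc n))"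
  shows "hCauchy ip s"
proof -
  \<comment> \<open>parallelogram law, using that the midpoint of h and k lies in A\<close>
  have diff_le: "(hnorm ip (\<lambda>x. h x - k x))\<^sup>2 \<le> 2 * (hnorm ip h)\<^sup>2 + 2 * (hnorm ip k)\<^sup>2 - 4 * D"
    if "h \<in> A" "k \<in> A" for h k
  proof -
    have hk: "h \<in> H" "k \<in> H"
      using that A by auto
    have "D \<le> (hnorm ip (\<lambda>x. (1/2) * (h x + k x)))\<^sup>2"
      using D_le[OF midpoint[OF that]] .
    also have "hnorm ip (\<lambda>x. (1/2) * (h x + k x)) = (1/2) * hnorm ip (\<lambda>x. h x + k x)"
      using hnorm_scale[OF add_mem[OF hk], of "1/2"] by simp
    finally have "4 * D \<le> (hnorm ip (\<lambda>x. h x + k x))\<^sup>2"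
      by (simp add: power_divide)
    then show ?thesis
      using hnorm_parallelogram[OF hk] by linarith
  qed
  show ?thesis
  proof (rule hCauchy_if_hnorm_sq_diff_le)
    show "s n \<in> H" for n
      using s(1) A by blast
    show "(\<lambda>n. 4 * inverse (real (Suc n))) \<longlonglongrightarrow> 0"
      using tendsto_mult_right[OF LIMSEQ_inverse_real_of_nat, of 4] by simp
    fix n m :: nat
    assume "n \<le> m"
    then have "inverse (real (Suc m)) \<le> inverse (real (Suc n))"
      by (simp add: le_imp_inverse_le)
    then show "(hnorm ip (\<lambda>x. s n x - s m x))\<^sup>2 \<le> 4 * inverse (real (Suc n))"
      using diff_le[OF s(1) s(1), of n m] s(2)[of n] s(2)[of m] by linarith
  qed
qed

lemma exists_min_hnorm:
  assumes A: "A \<subseteq> H" "a0 \<in> A"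
    and midpoint: "\<And>h k. h \<in> A \<Longrightarrow> k \<in> A \<Longrightarrow> (\<lambda>x. (1/2) * (h x + k x)) \<in> A"
    and closed: "\<And>s z. (\<And>n. s n \<in> A) \<Longrightarrow> z \<in> H \<Longrightarrow>
                   (\<lambda>n. hnorm ip (\<lambda>x. s n x - z x)) \<longlonglongrightarrow> 0 \<Longrightarrow> z \<in> A"
  shows "\<exists>z\<in>A. \<forall>h\<in>A. hnorm ip z \<le> hnorm ip h"
proof -
  define D where "D = (INF h\<in>A. (hnorm ip h)\<^sup>2)"
  have bdd: "bdd_below ((\<lambda>h. (hnorm ip h)\<^sup>2) ` A)"
    by (intro bdd_belowI[of _ 0]) auto
  have D_le: "D \<le> (hnorm ip h)\<^sup>2" if "h \<in> A" for h
    unfolding D_def using that bdd by (intro cINF_lower)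
  have "\<exists>h\<in>A. (hnorm ip h)\<^sup>2 < D + inverse (real (Suc n))" for n
    using cInf_lessD[of "(\<lambda>h. (hnorm ip h)\<^sup>2) ` A" "D + inverse (real (Suc n))"] A(2)
    unfolding D_def by auto
  then obtain s where s: "\<And>n. s n \<in> A" "\<And>n. (hnorm ip (s n))\<^sup>2 < D + inverse (real (Suc n))"
    by metis
  have sH: "s n \<in> H" for n
    using s(1) A(1) by blast
  have "hCauchy ip s"
    using hCauchy_minimising_sequence[OF A(1) midpoint D_le s] .
  then obtain z where zH: "z \<in> H" and lim: "(\<lambda>n. hnorm ip (\<lambda>x. s n x - z x)) \<longlonglongrightarrow> 0"
    using complete sH by blast
  have z_le: "hnorm ip z \<le> sqrt D"
  proof (rule LIMSEQ_le_const)
    have "(\<lambda>n. sqrt (D + inverse (real (Suc n))) + hnorm ip (\<lambda>x. s n x - z x)) \<longlonglongrightarrow> sqrt (D + 0) + 0"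
      by (intro tendsto_add tendsto_real_sqrt tendsto_const LIMSEQ_inverse_real_of_nat lim)
    then show "(\<lambda>n. sqrt (D + inverse (real (Suc n))) + hnorm ip (\<lambda>x. s n x - z x)) \<longlonglongrightarrow> sqrt D"
      by simp
    show "\<exists>N. \<forall>n\<ge>N. hnorm ip z \<le> sqrt (D + inverse (real (Suc n))) + hnorm ip (\<lambda>x. s n x - z x)"
    proof (intro exI allI impI)
      fix n
      have "hnorm ip z \<le> hnorm ip (s n) + hnorm ip (\<lambda>x. z x - s n x)"
        using hnorm_triangle[OF sH[of n] diff_mem[OF zH sH[of n]]] by simp
      moreover have "hnorm ip (s n) \<le> sqrt (D + inverse (real (Suc n)))"
        using s(2)[of n] real_le_rsqrt by fastforce
      ultimately show "hnorm ip z \<le> sqrt (D + inverse (real (Suc n))) + hnorm ip (\<lambda>x. s n x - z x)"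
        using hnorm_diff_commute[OF zH sH] by simp
    qed
  qed
  have "sqrt D \<le> hnorm ip h" if "h \<in> A" for h
    using D_le[OF that] hnorm_nonneg[of h] that A(1) real_sqrt_le_mono by fastforce
  then show ?thesis
    using closed[OF s(1) zH lim] z_le by (blast intro: order_trans)
qed

lemma ip_eq_0_if_hnorm_min:
  assumes z: "z \<in> H" and k: "k \<in> H"
    and min: "\<And>t. hnorm ip z \<le> hnorm ip (\<lambda>x. z x + t * k x)"
  shows "ip z k = 0"
proof -
  define a where "a = ip z k"
  define K where "K = (hnorm ip k)\<^sup>2"
  have K: "K \<ge> 0"
    unfolding K_def by simp
  \<comment> \<open>the step t is small enough that the quadratic term cannot outweigh the linear one\<close>
  define r :: real where "r = - 1 / (K + 1)"
  define t where "t = of_real r * a"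
  have tk: "(\<lambda>x. t * k x) \<in> H"
    using scale_mem[OF k] .
  have "(hnorm ip z)\<^sup>2 \<le> (hnorm ip (\<lambda>x. z x + t * k x))\<^sup>2"
    using min hnorm_nonneg[OF z] by (simp add: power_mono)
  also have "\<dots> = (hnorm ip z)\<^sup>2 + 2 * Re (cnj t * a) + (cmod t * hnorm ip k)\<^sup>2"
    using hnorm_add_sq[OF z tk] ip_scale_right[OF k z] hnorm_scale[OF k] a_def by simp
  also have "Re (cnj t * a) = r * (cmod a)\<^sup>2"
    unfolding t_def cmod_power2 by (simp add: power2_eq_square algebra_simps)
  also have "(cmod t * hnorm ip k)\<^sup>2 = r\<^sup>2 * (cmod a)\<^sup>2 * K"
    unfolding t_def K_def by (simp add: norm_mult power_mult_distrib)
  finally have "0 \<le> 2 * r * (cmod a)\<^sup>2 + r\<^sup>2 * (cmod a)\<^sup>2 * K"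
    by simp
  also have "2 * r * (cmod a)\<^sup>2 + r\<^sup>2 * (cmod a)\<^sup>2 * K = - (cmod a)\<^sup>2 * (K + 2) / (K + 1)\<^sup>2"
    using K unfolding r_def by (simp add: divide_simps power2_eq_square) (simp add: algebra_simps)
  finally have "(cmod a)\<^sup>2 * (K + 2) \<le> 0"
    using K by (simp add: divide_le_0_iff)
  then show ?thesis
    using K unfolding a_def by (simp add: mult_le_0_iff)
qed

lemma hlinear_diff: "hlinear H L \<Longrightarrow> f \<in> H \<Longrightarrow> g \<in> H \<Longrightarrow> L (\<lambda>x. f x - g x) = L f - L g"
  using hlinear_add[of H L f "\<lambda>x. (-1) * g x"] hlinear_scale[of H L g "-1"] scale_mem[of g "-1"] by simp

lemma exists_min_hnorm_hyperplane:
  fixes L :: "('x \<Rightarrow> complex) \<Rightarrow> complex"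
  assumes L: "hlinear H L"
    and L_bounded: "\<And>f. f \<in> H \<Longrightarrow> cmod (L f) \<le> C * hnorm ip f"
    and h0: "h0 \<in> H" "L h0 \<noteq> 0"
  shows "\<exists>z\<in>H. L z = 1 \<and> (\<forall>h\<in>H. L h = 1 \<longrightarrow> hnorm ip z \<le> hnorm ip h)"
proof -
  define A where "A = {h\<in>H. L h = 1}"
  have "\<exists>z\<in>A. \<forall>h\<in>A. hnorm ip z \<le> hnorm ip h"
  proof (rule exists_min_hnorm)
    show "A \<subseteq> H"
      unfolding A_def by blast
    show "(\<lambda>x. (1 / L h0) * h0 x) \<in> A"
      unfolding A_def using scale_mem[OF h0(1), of "1 / L h0"] hlinear_scale[OF L h0(1), of "1 / L h0"] h0(2)
      by simp
    show "(\<lambda>x. (1/2) * (h x + k x)) \<in> A" if "h \<in> A" "k \<in> A" for h k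
    proof -
      have hk: "h \<in> H" "k \<in> H" "L h = 1" "L k = 1"
        using that unfolding A_def by auto
      show ?thesis
        unfolding A_def using scale_mem[OF add_mem[OF hk(1,2)], of "1/2"]
          hlinear_scale[OF L add_mem[OF hk(1,2)], of "1/2"] hlinear_add[OF L hk(1,2)] hk(3,4)
        by simp
    qed
    show "z \<in> A" if s: "\<And>n. s n \<in> A" and z: "z \<in> H"
      and lim: "(\<lambda>n. hnorm ip (\<lambda>x. s n x - z x)) \<longlonglongrightarrow> 0" for s z
    proof -
      have "cmod (L z - 1) \<le> C * hnorm ip (\<lambda>x. s n x - z x)" for n
      proof -
        have sn: "s n \<in> H" "L (s n) = 1"
          using s[of n] unfolding A_def by auto
        have "L (\<lambda>x. s n x - z x) = 1 - L z"
          using hlinear_diff[OF L sn(1) z] sn(2) by simp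
        then show ?thesis
          using L_bounded[OF diff_mem[OF sn(1) z]] norm_minus_commute[of "L z" 1] by simp
      qed
      then have "cmod (L z - 1) \<le> 0"
        by (intro LIMSEQ_le_const[OF tendsto_mult_right_zero[OF lim, of C]]) auto
      then show ?thesis
        using z unfolding A_def by simp
    qed
  qed
  then show ?thesis
    unfolding A_def by blast
qed

lemma representer_if_orthogonal_kernel:
  fixes L :: "('x \<Rightarrow> complex) \<Rightarrow> complex"
  assumes L: "hlinear H L"
    and z: "z \<in> H" "L z = 1"
    and orth: "\<And>k. k \<in> H \<Longrightarrow> L k = 0 \<Longrightarrow> ip z k = 0"
    and h: "h \<in> H"
  shows "L h = ip h (\<lambda>x. of_real (1 / (hnorm ip z)\<^sup>2) * z x)"
proof -
  have "z \<noteq> (\<lambda>x. 0)"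
    using z(2) hlinear_scale[OF L z(1), of 0] by auto
  then have nz: "hnorm ip z \<noteq> 0"
    using hnorm_eq_0_iff z(1) by blast
  have k: "(\<lambda>x. h x - L h * z x) \<in> H" "L (\<lambda>x. h x - L h * z x) = 0"
    using h z hlinear_diff[OF L h scale_mem[OF z(1)]] hlinear_scale[OF L z(1)]
    by (auto intro: diff_mem scale_mem)
  have "ip (\<lambda>x. h x - L h * z x) z = 0"
    using orth[OF k] ip_cnj_commute[OF z(1) k(1)] by simp
  then have hz: "ip h z = L h * of_real ((hnorm ip z)\<^sup>2)"
    using h z(1) by (simp add: ip_diff_left ip_scale_left scale_mem ip_self_eq_hnorm_sq)
  have "ip h (\<lambda>x. of_real (1 / (hnorm ip z)\<^sup>2) * z x) = cnj (of_real (1 / (hnorm ip z)\<^sup>2)) * ip h z"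
    by (rule ip_scale_right[OF z(1) h])
  then show ?thesis
    using nz hz by (simp add: of_real_divide)
qed

lemma riesz_representation:
  fixes L :: "('x \<Rightarrow> complex) \<Rightarrow> complex"
  assumes L: "hlinear H L"
    and L_bounded: "\<And>f. f \<in> H \<Longrightarrow> cmod (L f) \<le> C * hnorm ip f"
  shows "\<exists>g\<in>H. \<forall>h\<in>H. L h = ip h g"
proof (cases "\<forall>h\<in>H. L h = 0")
  case True
  then show ?thesis
    using zero_mem ip_zero_right by auto
next
  case False
  then obtain h0 where h0: "h0 \<in> H" "L h0 \<noteq> 0"
    by blast
  obtain z where z: "z \<in> H" "L z = 1"
    and z_min: "\<And>h. h \<in> H \<Longrightarrow> L h = 1 \<Longrightarrow> hnorm ip z \<le> hnorm ip h"
    using exists_min_hnorm_hyperplane[OF L L_bounded h0] by blast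
  have orth: "ip z k = 0" if k: "k \<in> H" "L k = 0" for k
  proof (rule ip_eq_0_if_hnorm_min[OF z(1) k(1)])
    fix t
    show "hnorm ip z \<le> hnorm ip (\<lambda>x. z x + t * k x)"
      using z k add_mem[OF z(1) scale_mem[OF k(1)]] hlinear_add[OF L z(1) scale_mem[OF k(1)]] hlinear_scale[OF L k(1)]
      by (intro z_min) simp_all
  qed
  show ?thesis
    using representer_if_orthogonal_kernel[OF L z orth] scale_mem[OF z(1)] by blast
qed

lemma hadj_spec:
  assumes \<psi>: "mult_ball H ip \<psi>" and f: "f \<in> H"
  shows "hadj H ip (Mop \<psi>) f \<in> H \<and> (\<forall>h\<in>H. ip (Mop \<psi> h) f = ip h (hadj H ip (Mop \<psi>) f))"
proof -
  have "\<exists>g\<in>H. \<forall>h\<in>H. ip (\<lambda>x. \<psi> x * h x) f = ip h g"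
  proof (rule riesz_representation)
    show "hlinear H (\<lambda>h. ip (\<lambda>x. \<psi> x * h x) f)"
      unfolding hlinear_def
      using ip_add_left[OF mult_ball_mem[OF \<psi>] mult_ball_mem[OF \<psi>] f]
        ip_scale_left[OF mult_ball_mem[OF \<psi>] f]
      by (simp add: distrib_left mult.left_commute)
  next
    fix h
    assume h: "h \<in> H"
    have "cmod (ip (\<lambda>x. \<psi> x * h x) f) \<le> hnorm ip (\<lambda>x. \<psi> x * h x) * hnorm ip f"
      using norm_ip_le_hnorm_mult[OF mult_ball_mem[OF \<psi> h] f] .
    also have "\<dots> \<le> hnorm ip f * hnorm ip h"
      using mult_right_mono[OF mult_ball_hnorm_le[OF \<psi> h] hnorm_nonneg[OF f]] by (simp add: mult.commute)
    finally show "cmod (ip (\<lambda>x. \<psi> x * h x) f) \<le> hnorm ip f * hnorm ip h" .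
  qed
  then have "\<exists>!g. g \<in> H \<and> (\<forall>h\<in>H. ip (Mop \<psi> h) f = ip h g)"
    unfolding Mop_def using ip_right_unique by (intro ex_ex1I) auto
  then show ?thesis
    unfolding hadj_def by (rule theI')
qed

lemma hadj_mem: "mult_ball H ip \<psi> \<Longrightarrow> f \<in> H \<Longrightarrow> hadj H ip (Mop \<psi>) f \<in> H"
  using hadj_spec by blast

lemma ip_Mop_hadj:
  "mult_ball H ip \<psi> \<Longrightarrow> f \<in> H \<Longrightarrow> h \<in> H \<Longrightarrow> ip (Mop \<psi> h) f = ip h (hadj H ip (Mop \<psi>) f)"
  using hadj_spec by blast

lemma hadj_eqI:
  assumes "mult_ball H ip \<psi>" "f \<in> H" "g \<in> H" "\<And>h. h \<in> H \<Longrightarrow> ip (Mop \<psi> h) f = ip h g"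
  shows "hadj H ip (Mop \<psi>) f = g"
  using ip_right_unique[OF hadj_mem[OF assms(1,2)] assms(3)] ip_Mop_hadj[OF assms(1,2)] assms(4) by simp

lemma hadj_one: "f \<in> H \<Longrightarrow> hadj H ip (Mop (\<lambda>x. 1)) f = f"
  by (rule hadj_eqI[OF mult_ball_one]) (auto simp: Mop_def)

lemma hadj_mult:
  assumes \<alpha>: "mult_ball H ip \<alpha>" and \<beta>: "mult_ball H ip \<beta>" and f: "f \<in> H"
  shows "hadj H ip (Mop (\<lambda>x. \<alpha> x * \<beta> x)) f = hadj H ip (Mop \<beta>) (hadj H ip (Mop \<alpha>) f)"
proof (rule hadj_eqI[OF mult_ball_mult[OF \<alpha> \<beta>] f])
  show "hadj H ip (Mop \<beta>) (hadj H ip (Mop \<alpha>) f) \<in> H"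
    by (intro hadj_mem \<alpha> \<beta> f)
  fix h
  assume h: "h \<in> H"
  have "ip (Mop (\<lambda>x. \<alpha> x * \<beta> x) h) f = ip (Mop \<alpha> (Mop \<beta> h)) f"
    unfolding Mop_def by (simp add: mult.assoc)
  also have "\<dots> = ip (Mop \<beta> h) (hadj H ip (Mop \<alpha>) f)"
    using ip_Mop_hadj[OF \<alpha> f] mult_ball_mem[OF \<beta> h] unfolding Mop_def by blast
  also have "\<dots> = ip h (hadj H ip (Mop \<beta>) (hadj H ip (Mop \<alpha>) f))"
    using ip_Mop_hadj[OF \<beta> hadj_mem[OF \<alpha> f] h] .
  finally show "ip (Mop (\<lambda>x. \<alpha> x * \<beta> x) h) f = ip h (hadj H ip (Mop \<beta>) (hadj H ip (Mop \<alpha>) f))" .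
qed

lemma hnorm_hadj_le:
  assumes \<psi>: "mult_ball H ip \<psi>" and f: "f \<in> H"
  shows "hnorm ip (hadj H ip (Mop \<psi>) f) \<le> hnorm ip f"
proof -
  define g where "g = hadj H ip (Mop \<psi>) f"
  have g: "g \<in> H"
    unfolding g_def using hadj_mem[OF \<psi> f] .
  have "(hnorm ip g)\<^sup>2 = Re (ip (Mop \<psi> g) f)"
    using hnorm_sq[OF g] ip_Mop_hadj[OF \<psi> f g] unfolding g_def by simp
  also have "\<dots> \<le> hnorm ip (\<lambda>x. \<psi> x * g x) * hnorm ip f"
    using complex_Re_le_cmod norm_ip_le_hnorm_mult[OF mult_ball_mem[OF \<psi> g] f] unfolding Mop_def
    by (rule order_trans)
  also have "\<dots> \<le> hnorm ip g * hnorm ip f"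
    using mult_ball_hnorm_le[OF \<psi> g] hnorm_nonneg[OF f] by (rule mult_right_mono)
  finally have "hnorm ip g * hnorm ip g \<le> hnorm ip g * hnorm ip f"
    by (simp add: power2_eq_square)
  then have "hnorm ip g \<le> hnorm ip f"
    using hnorm_nonneg[OF g] hnorm_nonneg[OF f]
    by (cases "hnorm ip g = 0") (auto simp: mult_le_cancel_left_pos)
  then show ?thesis
    unfolding g_def .
qed

lemma Qop_apply: "Qop H ip \<psi> u = (\<lambda>x. u x - \<psi> x * hadj H ip (Mop \<psi>) u x)"
  by (simp add: Qop_def Mop_def)

lemma Qop_mem: "mult_ball H ip \<psi> \<Longrightarrow> u \<in> H \<Longrightarrow> Qop H ip \<psi> u \<in> H"
  unfolding Qop_apply by (intro diff_mem mult_ball_mem hadj_mem)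

lemma hnorm_Qop_sq_le:
  assumes \<psi>: "mult_ball H ip \<psi>" and u: "u \<in> H"
  shows "(hnorm ip (Qop H ip \<psi> u))\<^sup>2 \<le> (hnorm ip u)\<^sup>2 - (hnorm ip (hadj H ip (Mop \<psi>) u))\<^sup>2"
proof -
  define w where "w = hadj H ip (Mop \<psi>) u"
  have w: "w \<in> H"
    unfolding w_def using hadj_mem[OF \<psi> u] .
  have \<psi>w: "(\<lambda>x. \<psi> x * w x) \<in> H"
    using mult_ball_mem[OF \<psi> w] .
  have "Re (ip u (\<lambda>x. \<psi> x * w x)) = Re (ip (\<lambda>x. \<psi> x * w x) u)"
    using ip_cnj_commute[OF \<psi>w u] by simp
  also have "ip (\<lambda>x. \<psi> x * w x) u = ip w w"
    using ip_Mop_hadj[OF \<psi> u w] unfolding Mop_def w_def .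
  finally have "Re (ip u (\<lambda>x. \<psi> x * w x)) = (hnorm ip w)\<^sup>2"
    using hnorm_sq[OF w] by simp
  moreover have "(hnorm ip (\<lambda>x. \<psi> x * w x))\<^sup>2 \<le> (hnorm ip w)\<^sup>2"
    using mult_ball_hnorm_le[OF \<psi> w] hnorm_nonneg[OF \<psi>w] by (rule power_mono)
  ultimately have "(hnorm ip (\<lambda>x. u x - \<psi> x * w x))\<^sup>2 \<le> (hnorm ip u)\<^sup>2 - (hnorm ip w)\<^sup>2"
    using hnorm_diff_sq[OF u \<psi>w] by linarith
  then show ?thesis
    unfolding Qop_apply w_def .
qed

end

lemma Phi_0: "Phi \<phi> 0 = (\<lambda>x. 1)"
  unfolding Phi_def by simp

lemma Phi_Suc: "Phi \<phi> (Suc n) = (\<lambda>x. Phi \<phi> n x * \<phi> (Suc n) x)"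
  unfolding Phi_def by (simp add: prod.cl_ivl_Suc)

lemma Phi_split: "n \<le> m \<Longrightarrow> Phi \<phi> m = (\<lambda>x. Phi \<phi> n x * (\<Prod>k\<in>{Suc n..m}. \<phi> k x))"
proof (induction m rule: dec_induct)
  case base
  then show ?case
    by simp
next
  case (step m)
  then show ?case
    by (simp add: Phi_Suc prod.cl_ivl_Suc mult.assoc)
qed

lemma sum_Icc_1_telescope:
  fixes r :: "nat \<Rightarrow> 'a::ab_group_add"
  shows "(\<Sum>n\<in>{1..N}. r (n - 1) - r n) = r 0 - r N"
  by (induction N) (simp_all add: sum.cl_ivl_Suc)

definition Phi_tail :: "('x \<Rightarrow> complex) set \<Rightarrow> (('x \<Rightarrow> complex) \<Rightarrow> ('x \<Rightarrow> complex) \<Rightarrow> complex)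
    \<Rightarrow> (nat \<Rightarrow> 'x \<Rightarrow> complex) \<Rightarrow> ('x \<Rightarrow> complex) \<Rightarrow> nat \<Rightarrow> 'x \<Rightarrow> complex" where
  "Phi_tail H ip \<phi> f n = (\<lambda>x. Phi \<phi> n x * hadj H ip (Mop (Phi \<phi> n)) f x)"

context rkhs_space
begin

context
  fixes \<phi> :: "nat \<Rightarrow> 'x \<Rightarrow> complex"
  assumes \<phi>_ball: "\<And>n. n \<ge> 1 \<Longrightarrow> mult_ball H ip (\<phi> n)"
begin

lemma mult_ball_prod_Icc: "mult_ball H ip (\<lambda>x. \<Prod>k\<in>{Suc n..m}. \<phi> k x)"
  by (rule mult_ball_prod) (use \<phi>_ball in auto)

lemma mult_ball_Phi: "mult_ball H ip (Phi \<phi> n)"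
  unfolding Phi_def by (rule mult_ball_prod) (use \<phi>_ball in auto)

lemma hadj_Phi_split:
  assumes "n \<le> m" "f \<in> H"
  shows "hadj H ip (Mop (Phi \<phi> m)) f
     = hadj H ip (Mop (\<lambda>x. \<Prod>k\<in>{Suc n..m}. \<phi> k x)) (hadj H ip (Mop (Phi \<phi> n)) f)"
  unfolding Phi_split[OF assms(1), of \<phi>] by (rule hadj_mult[OF mult_ball_Phi mult_ball_prod_Icc assms(2)])

lemma hadj_Phi_Suc:
  "f \<in> H \<Longrightarrow> hadj H ip (Mop (Phi \<phi> (Suc n))) f = hadj H ip (Mop (\<phi> (Suc n))) (hadj H ip (Mop (Phi \<phi> n)) f)"
  using hadj_Phi_split[of n "Suc n" f] by simp

lemma Phi_tail_mem: "f \<in> H \<Longrightarrow> Phi_tail H ip \<phi> f n \<in> H"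
  unfolding Phi_tail_def by (intro mult_ball_mem[OF mult_ball_Phi] hadj_mem[OF mult_ball_Phi])

lemma Phi_mult_Qop_eq_Phi_tail_diff:
  assumes "f \<in> H" "n \<ge> 1"
  shows "Phi \<phi> (n - 1) x * Qop H ip (\<phi> n) (hadj H ip (Mop (Phi \<phi> (n - 1))) f) x
     = Phi_tail H ip \<phi> f (n - 1) x - Phi_tail H ip \<phi> f n x"
proof -
  obtain m where n: "n = Suc m"
    using assms(2) by (cases n) auto
  show ?thesis
    using hadj_Phi_Suc[OF assms(1), of m] unfolding n
    by (simp add: Qop_apply Phi_tail_def Phi_Suc algebra_simps)
qed

lemma f_minus_partial_sum_eq_Phi_tail:
  assumes "f \<in> H"
  shows "(\<lambda>x. f x - (\<Sum>n\<in>{1..N}. Phi \<phi> (n - 1) x * Qop H ip (\<phi> n) (hadj H ip (Mop (Phi \<phi> (n - 1))) f) x))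
    = Phi_tail H ip \<phi> f N"
proof
  fix x
  have "(\<Sum>n\<in>{1..N}. Phi \<phi> (n - 1) x * Qop H ip (\<phi> n) (hadj H ip (Mop (Phi \<phi> (n - 1))) f) x)
      = (\<Sum>n\<in>{1..N}. Phi_tail H ip \<phi> f (n - 1) x - Phi_tail H ip \<phi> f n x)"
    using Phi_mult_Qop_eq_Phi_tail_diff[OF assms] by (intro sum.cong) auto
  also have "\<dots> = Phi_tail H ip \<phi> f 0 x - Phi_tail H ip \<phi> f N x"
    by (rule sum_Icc_1_telescope)
  also have "Phi_tail H ip \<phi> f 0 x = f x"
    using hadj_one[OF assms] by (simp add: Phi_tail_def Phi_0)
  finally show "f x - (\<Sum>n\<in>{1..N}. Phi \<phi> (n - 1) x * Qop H ip (\<phi> n) (hadj H ip (Mop (Phi \<phi> (n - 1))) f) x)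
      = Phi_tail H ip \<phi> f N x"
    by simp
qed

lemma hnorm_Phi_tail_diff_sq_le:
  assumes f: "f \<in> H" and nm: "n \<le> m"
  shows "(hnorm ip (\<lambda>x. Phi_tail H ip \<phi> f n x - Phi_tail H ip \<phi> f m x))\<^sup>2
    \<le> (hnorm ip (hadj H ip (Mop (Phi \<phi> n)) f))\<^sup>2 - (hnorm ip (hadj H ip (Mop (Phi \<phi> m)) f))\<^sup>2"
proof -
  define \<psi> where "\<psi> = (\<lambda>x. \<Prod>k\<in>{Suc n..m}. \<phi> k x)"
  define g where "g = hadj H ip (Mop (Phi \<phi> n)) f"
  have \<psi>: "mult_ball H ip \<psi>"
    unfolding \<psi>_def by (rule mult_ball_prod_Icc)
  have g: "g \<in> H"
    unfolding g_def by (rule hadj_mem[OF mult_ball_Phi f])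
  have gm: "hadj H ip (Mop (Phi \<phi> m)) f = hadj H ip (Mop \<psi>) g"
    unfolding \<psi>_def g_def by (rule hadj_Phi_split[OF nm f])
  have "(\<lambda>x. Phi_tail H ip \<phi> f n x - Phi_tail H ip \<phi> f m x) = (\<lambda>x. Phi \<phi> n x * Qop H ip \<psi> g x)"
    unfolding Phi_tail_def Qop_apply gm unfolding Phi_split[OF nm, of \<phi>]
    by (simp add: g_def \<psi>_def algebra_simps)
  then have "hnorm ip (\<lambda>x. Phi_tail H ip \<phi> f n x - Phi_tail H ip \<phi> f m x) \<le> hnorm ip (Qop H ip \<psi> g)"
    using mult_ball_hnorm_le[OF mult_ball_Phi Qop_mem[OF \<psi> g]] by simp
  then have "(hnorm ip (\<lambda>x. Phi_tail H ip \<phi> f n x - Phi_tail H ip \<phi> f m x))\<^sup>2 \<le> (hnorm ip (Qop H ip \<psi> g))\<^sup>2"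
    using diff_mem[OF Phi_tail_mem[OF f] Phi_tail_mem[OF f]] by (intro power_mono hnorm_nonneg)
  also have "\<dots> \<le> (hnorm ip g)\<^sup>2 - (hnorm ip (hadj H ip (Mop \<psi>) g))\<^sup>2"
    by (rule hnorm_Qop_sq_le[OF \<psi> g])
  finally show ?thesis
    unfolding gm g_def .
qed

lemma hCauchy_Phi_tail:
  assumes f: "f \<in> H"
  shows "hCauchy ip (Phi_tail H ip \<phi> f)"
proof -
  define a where "a n = (hnorm ip (hadj H ip (Mop (Phi \<phi> n)) f))\<^sup>2" for n
  have "decseq a"
  proof (rule decseq_SucI)
    fix n
    show "a (Suc n) \<le> a n"
      unfolding a_def hadj_Phi_Suc[OF f]
      by (intro power_mono hnorm_hadj_le hnorm_nonneg hadj_mem mult_ball_Phi f \<phi>_ball) simp_all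
  qed
  then obtain l where l: "a \<longlonglongrightarrow> l" "\<And>n. l \<le> a n"
    using decseq_convergent[of a 0] unfolding a_def by (metis zero_le_power2)
  show ?thesis
  proof (rule hCauchy_if_hnorm_sq_diff_le[OF Phi_tail_mem[OF f]])
    show "(\<lambda>n. a n - l) \<longlonglongrightarrow> 0"
      using l(1) by (simp add: LIM_zero)
    show "(hnorm ip (\<lambda>x. Phi_tail H ip \<phi> f n x - Phi_tail H ip \<phi> f m x))\<^sup>2 \<le> a n - l"
      if "n \<le> m" for n m
      using hnorm_Phi_tail_diff_sq_le[OF f that] l(2)[of m] unfolding a_def by linarith
  qed
qed

lemma Phi_tail_tendsto_0:
  assumes f: "f \<in> H" and Phi_lim: "(\<lambda>n. Phi \<phi> n x) \<longlonglongrightarrow> 0"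
  shows "(\<lambda>n. Phi_tail H ip \<phi> f n x) \<longlonglongrightarrow> 0"
proof -
  obtain C where C: "\<And>h. h \<in> H \<Longrightarrow> cmod (h x) \<le> C * hnorm ip h"
    using eval_bounded by blast
  have "cmod (hadj H ip (Mop (Phi \<phi> n)) f x) \<le> \<bar>C\<bar> * hnorm ip f" for n
  proof -
    have g: "hadj H ip (Mop (Phi \<phi> n)) f \<in> H"
      by (rule hadj_mem[OF mult_ball_Phi f])
    have "cmod (hadj H ip (Mop (Phi \<phi> n)) f x) \<le> \<bar>C\<bar> * hnorm ip (hadj H ip (Mop (Phi \<phi> n)) f)"
      using C[OF g] mult_right_mono[OF abs_ge_self hnorm_nonneg[OF g]] by (rule order_trans)
    also have "\<dots> \<le> \<bar>C\<bar> * hnorm ip f"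
      by (intro mult_left_mono hnorm_hadj_le[OF mult_ball_Phi f]) simp
    finally show ?thesis .
  qed
  then show ?thesis
    unfolding Phi_tail_def
    by (intro tendsto_0_le[OF Phi_lim, where K = "\<bar>C\<bar> * hnorm ip f"] always_eventually allI)
      (simp add: norm_mult mult_left_mono)
qed

end

end

theorem theorem2p1:
  fixes H :: "('x \<Rightarrow> complex) set"
    and ip :: "('x \<Rightarrow> complex) \<Rightarrow> ('x \<Rightarrow> complex) \<Rightarrow> complex"
    and \<phi> :: "nat \<Rightarrow> 'x \<Rightarrow> complex"
    and f :: "'x \<Rightarrow> complex"
  assumes "rkhs H ip"
    and "\<And>n. n \<ge> 1 \<Longrightarrow> mult_ball H ip (\<phi> n)"
    and "\<And>x. (\<lambda>n. Phi \<phi> n x) \<longlonglongrightarrow> 0"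
    and "f \<in> H"
  shows "(\<lambda>N. hnorm ip (\<lambda>x. f x - (\<Sum>n\<in>{1..N}.
            Phi \<phi> (n - 1) x * Qop H ip (\<phi> n) (hadj H ip (Mop (Phi \<phi> (n - 1))) f) x)))
         \<longlonglongrightarrow> 0"
proof -
  interpret rkhs_space H ip
    by (rule rkhs_space.intro) (rule assms(1))
  have "(\<lambda>N. hnorm ip (Phi_tail H ip \<phi> f N)) \<longlonglongrightarrow> 0"
    by (rule hnorm_tendsto_0_if_hCauchy[OF Phi_tail_mem hCauchy_Phi_tail Phi_tail_tendsto_0])
      (use assms in auto)
  then show ?thesis
    by (simp only: f_minus_partial_sum_eq_Phi_tail[where \<phi> = \<phi>, OF assms(2,4)])
qed
end
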